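(* Let $p(t)=a+bt+ct^2\in\mathbb C[t]$ with $a\,c\,(a+b+c)\neq 0$, let $V_{p}$ be its associated circulant matrix and $(S_{[k]})_{k\ge1}$ its sequence of column partial sums. Then [$V_{p}$ has a finite period and $(S_{[k]})_{k\geq1}$ is eventually periodic] if and only if [$b=c=-2a$, i.e. $p(t)=a(1-2t-2t^2)$, and $3a$ is a root of unity]. Moreover, in that case the period $\mu$ of $V_p$ satisfies $6\mid\mu$ and $(3a)^{\mu}=1$.
   Context: For a polynomial $p(t)=a_0+a_1t+\cdots+a_dt^d\in\mathbb C[t]$ of degree $d\ge1$ with $a_0\neq0$: the associated circulant matrix $V_p$ is the $(d+1)\times(d+1)$ matrix whose $(i,j)$ entry ($0\le i,j\le d$) is $a_{(i-j-1)\bmod (d+1)}$; thus its first row is $(a_d,a_{d-1},\dots,a_0)$ and each subsequent row is the cyclic right shift of the previous one. Let $e=(0,\dots,0,1)^T\in\mathbb C^{d+1}$. $V_p$ has a finite period if there exist integers $\mu\ge1$, $k_0\ge0$ with $V_p^{n+\mu}e=V_p^ne$ for all $n\ge k_0$; the period of $V_p$ is the smallest such $\mu$. The column partial sums are $S_{[k]}:=[t^{(k-1)(d+1)}]\dfrac{(tp(t))^k}{(1-t)(1-t^{d+1})}$ for $k\ge1$ (equivalently, the sum of the coefficients of $t^0,\dots,t^{(k-1)(d+1)}$ in the power series $(tp(t))^k/(1-t^{d+1})$). Here $d=2$. A sequence $(s_i)$ is eventually periodic if there are $N\ge1$ and $K$ with $s_{i+N}=s_i$ for all $i\ge K$. 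*)

theory Defs
  imports Complex_Main "HOL-Computational_Algebra.Polynomial" "HOL-Computational_Algebra.Formal_Power_Series"
    "HOL-Computational_Algebra.Polynomial_FPS"
begin

definition circ_matrix :: "complex poly \<Rightarrow> nat \<Rightarrow> nat \<Rightarrow> complex" where
  "circ_matrix p i j = coeff p (nat ((int i - int j - 1) mod int (degree p + 1)))"

definition mat_vec :: "nat \<Rightarrow> (nat \<Rightarrow> nat \<Rightarrow> complex) \<Rightarrow> (nat \<Rightarrow> complex) \<Rightarrow> (nat \<Rightarrow> complex)" where
  "mat_vec n A v = (\<lambda>i. if i < n then (\<Sum>j<n. A i j * v j) else 0)"

definition last_unit :: "complex poly \<Rightarrow> nat \<Rightarrow> complex" where
  "last_unit p = (\<lambda>i. if i = degree p then 1 else 0)"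

definition circ_pow_e :: "complex poly \<Rightarrow> nat \<Rightarrow> nat \<Rightarrow> complex" where
  "circ_pow_e p n = (mat_vec (degree p + 1) (circ_matrix p) ^^ n) (last_unit p)"

definition has_finite_period :: "complex poly \<Rightarrow> bool" where
  "has_finite_period p \<longleftrightarrow>
     (\<exists>\<mu>\<ge>1. \<exists>k0. \<forall>n\<ge>k0. circ_pow_e p (n + \<mu>) = circ_pow_e p n)"

definition circ_period :: "complex poly \<Rightarrow> nat" where
  "circ_period p = (LEAST \<mu>. \<mu> \<ge> 1 \<and> (\<exists>k0. \<forall>n\<ge>k0. circ_pow_e p (n + \<mu>) = circ_pow_e p n))"

definition col_sum :: "complex poly \<Rightarrow> nat \<Rightarrow> complex" where
  "col_sum p k = fps_nth ((fps_X * fps_of_poly p) ^ k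
       / ((1 - fps_X) * (1 - fps_X ^ (degree p + 1)))) ((k - 1) * (degree p + 1))"

definition eventually_periodic :: "(nat \<Rightarrow> 'a) \<Rightarrow> bool" where
  "eventually_periodic s \<longleftrightarrow> (\<exists>N\<ge>1. \<exists>K. \<forall>i\<ge>K. s (i + N) = s i)"

definition root_of_unity :: "complex \<Rightarrow> bool" where
  "root_of_unity z \<longleftrightarrow> (\<exists>n>0. z ^ n = 1)"

end

theory Submission
  imports Defs
begin

text \<open>
  The discrete Fourier transform x \<mapsto> \<Sum>i. z^i x_i at a cube root of unity z turns V_p into
  multiplication by the eigenvalue z p(z), and e has nonzero transform z^2. Hence V_p has a finite
  period iff every eigenvalue is zero or a root of unity.
  Expanding floor(m/3) over the cube roots of unity, 9 S_[k+1] is the drift term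
  3 (k+1) p(1)^k (2a+b) plus terms in p(1)^(k+1), p(omega)^(k+1), p(omega^2)^(k+1), which are
  periodic in k as soon as the eigenvalues are; so both periodicity conditions together force
  b = -2a. The values p(1), p(omega), p(omega^2) are then unimodular (or zero) and satisfy a linear
  relation, and comparing norms leaves only c = -2a. For p = a (1 - 2t - 2t^2) the eigenvalues are
  -3a, 3a omega and 3a omega^2, so every period is a multiple of 6 at which (3a)^mu = 1.
\<close>

lemma power_mod_eq_power:
  fixes z :: "'a :: monoid_mult"
  assumes "z ^ n = 1"
  shows "z ^ (k mod n) = z ^ k"
  by (metis assms mult_div_mod_eq power_add power_mult power_one mult_1)

definition omega :: complex where
  "omega = Complex (-1/2) (sqrt 3 / 2)"

lemma omega_squared_add_omega_add_1: "omega\<^sup>2 + omega + 1 = 0"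
  by (simp add: omega_def complex_eq_iff power2_eq_square)

lemma omega_cube: "omega ^ 3 = 1"
proof -
  have "omega ^ 3 - 1 = (omega - 1) * (omega\<^sup>2 + omega + 1)"
    by (simp add: algebra_simps power2_eq_square power3_eq_cube)
  then show ?thesis
    by (simp add: omega_squared_add_omega_add_1)
qed

lemma omega_squared_cube: "(omega\<^sup>2) ^ 3 = 1"
  by (metis omega_cube power_mult_distrib power_one power2_eq_square)

lemma cnj_omega: "cnj omega = omega\<^sup>2"
  by (simp add: omega_def complex_eq_iff power2_eq_square)

lemma omega_neq_1: "omega \<noteq> 1"
  by (simp add: omega_def complex_eq_iff)

lemma omega_power_mod_3: "omega ^ n = omega ^ (n mod 3)"
  by (simp add: power_mod_eq_power omega_cube)

lemma omega_power_eq_1_iff: "omega ^ n = 1 \<longleftrightarrow> 3 dvd n"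
proof -
  have "omega\<^sup>2 \<noteq> 1"
    by (simp add: omega_def complex_eq_iff power2_eq_square)
  moreover have "n mod 3 = 0 \<or> n mod 3 = 1 \<or> n mod 3 = 2"
    by arith
  ultimately show ?thesis
    by (subst omega_power_mod_3) (auto simp: omega_neq_1 dvd_eq_mod_eq_0)
qed

lemma cube_root_of_unity_iff: "(z :: complex) ^ 3 = 1 \<longleftrightarrow> z = 1 \<or> z = omega \<or> z = omega\<^sup>2"
proof -
  have "z ^ 3 - 1 = (z - 1) * (z - omega) * (z - omega\<^sup>2)"
    using omega_squared_add_omega_add_1 omega_cube by algebra
  then show ?thesis
    by auto
qed

definition dft :: "nat \<Rightarrow> complex \<Rightarrow> (nat \<Rightarrow> complex) \<Rightarrow> complex" where
  "dft n z x = (\<Sum>i<n. z ^ i * x i)"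

lemma cyclic_shift_unshift:
  fixes i j n :: nat
  assumes "i < n"
  shows "(nat ((int i - int j - 1) mod int n) + j + 1) mod n = i"
proof -
  define r where "r = (int i - int j - 1) mod int n"
  have "0 \<le> r" using assms by (simp add: r_def)
  then have "int ((nat r + j + 1) mod n) = (r + (int j + 1)) mod int n"
    by (simp add: of_nat_mod ac_simps)
  also have "\<dots> = int i"
    using assms by (simp add: r_def mod_add_left_eq)
  finally show ?thesis
    unfolding r_def by (simp only: of_nat_eq_iff)
qed

lemma cyclic_unshift_shift:
  fixes k j n :: nat
  assumes "k < n"
  shows "nat ((int ((k + j + 1) mod n) - int j - 1) mod int n) = k"
proof -
  have "(int ((k + j + 1) mod n) - (int j + 1)) mod int n = (int k + (int j + 1) - (int j + 1)) mod int n"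
    by (simp only: of_nat_mod mod_diff_left_eq) (simp add: ac_simps)
  then show ?thesis using assms by (simp add: diff_diff_eq)
qed

lemma circ_matrix_column_dft:
  assumes z: "z ^ (degree p + 1) = 1"
  shows "(\<Sum>i<degree p + 1. z ^ i * circ_matrix p i j) = z ^ (j + 1) * poly p z"
proof -
  define n where "n = degree p + 1"
  define shift where "shift i = nat ((int i - int j - 1) mod int n)" for i
  define unshift where "unshift k = (k + j + 1) mod n" for k
  have "n > 0" by (simp add: n_def)
  have zn: "z ^ n = 1"
    unfolding n_def by (rule z)
  have "(\<Sum>i<n. z ^ i * coeff p (shift i)) = (\<Sum>k<n. z ^ unshift k * coeff p k)"
  proof (rule sum.reindex_bij_witness[where i = unshift and j = shift])
    fix i assume "i \<in> {..<n}"
    then show i: "unshift (shift i) = i"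
      using cyclic_shift_unshift[of i n j] by (simp add: shift_def unshift_def)
    show "shift i \<in> {..<n}"
      using \<open>n > 0\<close> by (simp add: shift_def nat_less_iff)
    show "z ^ unshift (shift i) * coeff p (shift i) = z ^ i * coeff p (shift i)"
      by (simp only: i)
  next
    fix k assume "k \<in> {..<n}"
    then show "shift (unshift k) = k"
      using cyclic_unshift_shift[of k n j] by (simp add: shift_def unshift_def)
    show "unshift k \<in> {..<n}"
      using \<open>n > 0\<close> by (simp add: unshift_def)
  qed
  also have "\<dots> = (\<Sum>k<n. z ^ (j + 1) * (coeff p k * z ^ k))"
    by (simp add: unshift_def power_mod_eq_power[OF zn] power_add ac_simps)
  also have "\<dots> = z ^ (j + 1) * (\<Sum>k<n. coeff p k * z ^ k)"
    by (simp add: sum_distrib_left)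
  also have "(\<Sum>k<n. coeff p k * z ^ k) = poly p z"
    by (simp add: poly_altdef n_def lessThan_Suc_atMost)
  finally show ?thesis
    by (simp add: circ_matrix_def shift_def n_def)
qed

lemma dft_circ_mat_vec:
  assumes "z ^ (degree p + 1) = 1"
  shows "dft (degree p + 1) z (mat_vec (degree p + 1) (circ_matrix p) x)
       = z * poly p z * dft (degree p + 1) z x"
proof -
  define n where "n = degree p + 1"
  have "dft n z (mat_vec n (circ_matrix p) x) = (\<Sum>i<n. \<Sum>j<n. z ^ i * circ_matrix p i j * x j)"
    by (simp add: dft_def mat_vec_def sum_distrib_left mult.assoc)
  also have "\<dots> = (\<Sum>j<n. (\<Sum>i<n. z ^ i * circ_matrix p i j) * x j)"
    by (subst sum.swap) (simp add: sum_distrib_right)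
  also have "\<dots> = (\<Sum>j<n. z ^ (j + 1) * poly p z * x j)"
    unfolding n_def by (simp only: circ_matrix_column_dft[OF assms])
  also have "\<dots> = z * poly p z * dft n z x"
    by (simp add: dft_def sum_distrib_left ac_simps)
  finally show ?thesis
    unfolding n_def .
qed

lemma dft_last_unit: "dft (degree p + 1) z (last_unit p) = z ^ degree p"
proof -
  have "dft (degree p + 1) z (last_unit p) = (\<Sum>i<degree p + 1. if i = degree p then z ^ i else 0)"
    unfolding dft_def last_unit_def by (rule sum.cong) auto
  then show ?thesis
    by simp
qed

lemma dft_circ_pow_e:
  assumes "z ^ (degree p + 1) = 1"
  shows "dft (degree p + 1) z (circ_pow_e p n) = (z * poly p z) ^ n * z ^ degree p"
proof (induction n)
  case 0
  then show ?case
    using dft_last_unit by (simp add: circ_pow_e_def)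
next
  case (Suc n)
  then show ?case
    using dft_circ_mat_vec[OF assms] by (simp add: circ_pow_e_def)
qed

lemma circ_pow_e_eq_0:
  assumes "degree p < i"
  shows "circ_pow_e p n i = 0"
  using assms by (cases n) (simp_all add: circ_pow_e_def last_unit_def mat_vec_def)

lemma dft3_eq_imp_eq:
  assumes "\<And>i. 3 \<le> i \<Longrightarrow> x i = 0" "\<And>i. 3 \<le> i \<Longrightarrow> y i = 0"
    and "\<And>z. z ^ 3 = 1 \<Longrightarrow> dft 3 z x = dft 3 z y"
  shows "x = y"
proof
  fix i
  define d where "d j = x j - y j" for j
  have dft_d: "d 0 + z * d 1 + z\<^sup>2 * d 2 = 0" if "z ^ 3 = 1" for z
    using assms(3)[OF that] by (simp add: dft_def d_def eval_nat_numeral algebra_simps)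
  have "d 0 + d 1 + d 2 = 0" "d 0 + omega * d 1 + omega\<^sup>2 * d 2 = 0"
    "d 0 + omega\<^sup>2 * d 1 + (omega\<^sup>2)\<^sup>2 * d 2 = 0"
    using dft_d[of 1] dft_d[OF omega_cube] dft_d[OF omega_squared_cube] by simp_all
  then have "3 * d 0 = 0" "3 * d 1 = 0" "3 * d 2 = 0"
    using omega_squared_add_omega_add_1 by algebra+
  moreover have "d j = 0" if "3 \<le> j" for j
    using assms that by (simp add: d_def)
  ultimately have "d i = 0"
    by (cases "i < 3") (auto simp: less_Suc_eq numeral_3_eq_3 numeral_2_eq_2)
  then show "x i = y i"
    by (simp add: d_def)
qed

lemma circ_pow_e_eq_iff:
  assumes "degree p = 2"
  shows "circ_pow_e p m = circ_pow_e p n \<longleftrightarrow> (\<forall>z. z ^ 3 = 1 \<longrightarrow> (z * poly p z) ^ m = (z * poly p z) ^ n)"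
proof
  assume eq: "circ_pow_e p m = circ_pow_e p n"
  show "\<forall>z. z ^ 3 = 1 \<longrightarrow> (z * poly p z) ^ m = (z * poly p z) ^ n"
  proof (intro allI impI)
    fix z :: complex assume z: "z ^ 3 = 1"
    then have root: "z ^ (degree p + 1) = 1"
      using assms by simp
    have "(z * poly p z) ^ m * z ^ degree p = (z * poly p z) ^ n * z ^ degree p"
      using dft_circ_pow_e[OF root, of m] dft_circ_pow_e[OF root, of n] eq by simp
    moreover have "z \<noteq> 0"
      using z by auto
    ultimately show "(z * poly p z) ^ m = (z * poly p z) ^ n"
      by simp
  qed
next
  assume eigen: "\<forall>z. z ^ 3 = 1 \<longrightarrow> (z * poly p z) ^ m = (z * poly p z) ^ n"
  show "circ_pow_e p m = circ_pow_e p n"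
  proof (rule dft3_eq_imp_eq)
    fix z :: complex assume z: "z ^ 3 = 1"
    have three: "degree p + 1 = 3"
      using assms by simp
    have root: "z ^ (degree p + 1) = 1"
      using z three by simp
    have "dft (degree p + 1) z (circ_pow_e p m) = dft (degree p + 1) z (circ_pow_e p n)"
      using z eigen by (simp only: dft_circ_pow_e[OF root])
    then show "dft 3 z (circ_pow_e p m) = dft 3 z (circ_pow_e p n)"
      by (simp only: three)
  qed (use assms in \<open>simp_all add: circ_pow_e_eq_0\<close>)
qed

lemma power_add_eq_power_imp:
  fixes x :: "'a :: field"
  assumes "x ^ (n + m) = x ^ n"
  shows "x = 0 \<or> x ^ m = 1"
  using assms by (auto simp: power_add)

lemma power_add_eq_power:
  fixes x :: "'a :: semiring_1"
  assumes "x = 0 \<or> x ^ m = 1" and "n > 0"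
  shows "x ^ (n + m) = x ^ n"
  using assms by (auto simp: power_add zero_power)

lemma has_finite_period_iff:
  assumes "degree p = 2"
  shows "has_finite_period p \<longleftrightarrow>
    (\<exists>\<mu>\<ge>1. \<forall>z. z ^ 3 = 1 \<longrightarrow> z * poly p z = 0 \<or> (z * poly p z) ^ \<mu> = 1)"
proof
  assume "has_finite_period p"
  then obtain \<mu> k0 where "\<mu> \<ge> 1" and "circ_pow_e p (k0 + \<mu>) = circ_pow_e p k0"
    unfolding has_finite_period_def by blast
  then have "\<forall>z. z ^ 3 = 1 \<longrightarrow> (z * poly p z) ^ (k0 + \<mu>) = (z * poly p z) ^ k0"
    using circ_pow_e_eq_iff[OF assms] by blast
  with \<open>\<mu> \<ge> 1\<close> show "\<exists>\<mu>\<ge>1. \<forall>z. z ^ 3 = 1 \<longrightarrow> z * poly p z = 0 \<or> (z * poly p z) ^ \<mu> = 1"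
    using power_add_eq_power_imp by blast
next
  assume "\<exists>\<mu>\<ge>1. \<forall>z. z ^ 3 = 1 \<longrightarrow> z * poly p z = 0 \<or> (z * poly p z) ^ \<mu> = 1"
  then obtain \<mu> where "\<mu> \<ge> 1" and "\<forall>z. z ^ 3 = 1 \<longrightarrow> z * poly p z = 0 \<or> (z * poly p z) ^ \<mu> = 1"
    by blast
  then have "\<forall>n\<ge>1. circ_pow_e p (n + \<mu>) = circ_pow_e p n"
    using assms by (simp add: circ_pow_e_eq_iff power_add_eq_power)
  with \<open>\<mu> \<ge> 1\<close> show "has_finite_period p"
    unfolding has_finite_period_def by blast
qed

lemma circ_period_eigenvalues:
  assumes "degree p = 2" and "has_finite_period p" and "z ^ 3 = 1"
  shows "z * poly p z = 0 \<or> (z * poly p z) ^ circ_period p = 1"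
proof -
  have "circ_period p \<ge> 1 \<and> (\<exists>k0. \<forall>n\<ge>k0. circ_pow_e p (n + circ_period p) = circ_pow_e p n)"
    unfolding circ_period_def using assms(2)[unfolded has_finite_period_def] by (rule LeastI_ex)
  then obtain k0 where "circ_pow_e p (k0 + circ_period p) = circ_pow_e p k0"
    by auto
  then show ?thesis
    using circ_pow_e_eq_iff[OF assms(1)] assms(3) power_add_eq_power_imp by blast
qed

lemma fps_inverse_one_minus_X_mult_one_minus_X_power:
  assumes "n > 0"
  shows "inverse ((1 - fps_X) * (1 - fps_X ^ n) :: 'a :: field fps) = Abs_fps (\<lambda>m. of_nat (m div n + 1))"
proof -
  let ?H = "Abs_fps (\<lambda>m. of_nat (m div n + 1) :: 'a)"
  let ?T = "Abs_fps (\<lambda>m. if n dvd m then 1 else 0 :: 'a)"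
  have H: "?H * (1 - fps_X) = ?T"
  proof (rule fps_ext)
    fix m
    show "fps_nth (?H * (1 - fps_X)) m = fps_nth ?T m"
    proof (cases m)
      case (Suc l)
      then have "fps_nth (?H * (1 - fps_X)) m = of_nat (Suc l div n + 1) - of_nat (l div n + 1)"
        by (simp add: algebra_simps)
      also have "\<dots> = fps_nth ?T m"
        using Suc assms by (auto simp: div_Suc)
      finally show ?thesis .
    qed (simp add: algebra_simps)
  qed
  have T: "?T * (1 - fps_X ^ n) = 1"
  proof (rule fps_ext)
    fix m
    have "n dvd m \<longleftrightarrow> n dvd (m - n)" if "n \<le> m"
      using that by (simp add: dvd_minus_self)
    then show "fps_nth (?T * (1 - fps_X ^ n)) m = fps_nth 1 m"
      using assms by (auto simp: algebra_simps fps_X_power_mult_nth not_less)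
  qed
  have "(1 - fps_X) * (1 - fps_X ^ n) * ?H = ?H * (1 - fps_X) * (1 - fps_X ^ n)"
    by (simp only: ac_simps)
  also have "\<dots> = 1"
    unfolding H T ..
  finally have "(1 - fps_X) * (1 - fps_X ^ n) * ?H = 1" .
  then show ?thesis
    by (rule fps_inverse_unique)
qed

lemma col_sum_eq_sum:
  fixes p :: "complex poly"
  defines "d \<equiv> degree p"
  shows "col_sum p (k + 1)
       = (\<Sum>j\<le>d * (k + 1). coeff (p ^ (k + 1)) j * of_nat ((d * (k + 1) - j) div (d + 1)))"
proof -
  define P where "P = p ^ (k + 1)"
  define n where "n = d + 1"
  have "n > 0" by (simp add: n_def)
  have X_P: "(fps_X * fps_of_poly p) ^ (k + 1) = fps_X ^ (k + 1) * fps_of_poly P"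
    by (simp add: P_def power_mult_distrib fps_of_poly_power)
  have nth_X_P: "fps_nth (fps_X ^ (k + 1) * fps_of_poly P) i = (if i < k + 1 then 0 else coeff P (i - (k + 1)))" for i
    by (simp only: fps_X_power_mult_nth fps_of_poly_nth)
  have divide: "F / ((1 - fps_X) * (1 - fps_X ^ (degree p + 1))) = F * Abs_fps (\<lambda>m. of_nat (m div n + 1))"
    for F :: "complex fps"
    using fps_inverse_one_minus_X_mult_one_minus_X_power[of "degree p + 1", where 'a = complex]
    by (subst fps_divide_unit) (simp_all add: d_def n_def)
  have "col_sum p (k + 1) = fps_nth (fps_X ^ (k + 1) * fps_of_poly P * Abs_fps (\<lambda>m. of_nat (m div n + 1))) (k * n)"
    unfolding col_sum_def X_P divide by (simp add: d_def n_def)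
  also have "\<dots> = (\<Sum>i=0..k * n. (if i < k + 1 then 0 else coeff P (i - (k + 1))) * of_nat ((k * n - i) div n + 1))"
    by (simp only: fps_mult_nth[of "fps_X ^ (k + 1) * fps_of_poly P"] nth_X_P fps_nth_Abs_fps)
  also have "\<dots> = (\<Sum>i\<in>{k + 1..k * n}. coeff P (i - (k + 1)) * of_nat ((k * n - i) div n + 1))"
    by (rule sum.mono_neutral_cong_right) auto
  also have "\<dots> = (\<Sum>j<k * d. coeff P j * of_nat ((d * (k + 1) - j) div n))"
  proof (rule sum.reindex_bij_witness[where i = "\<lambda>j. j + (k + 1)" and j = "\<lambda>i. i - (k + 1)"])
    fix i assume i: "i \<in> {k + 1..k * n}"
    have kn: "k * n = k * d + k" "d * (k + 1) = k * d + d"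
      by (simp_all add: n_def algebra_simps)
    have "k + 1 \<le> i" "i \<le> k * n"
      using i by auto
    with kn n_def have shift: "d * (k + 1) - (i - (k + 1)) = k * n - i + n"
      by linarith
    have "(d * (k + 1) - (i - (k + 1))) div n = (k * n - i) div n + 1"
      unfolding shift using \<open>n > 0\<close> by simp
    then show "coeff P (i - (k + 1)) * of_nat ((d * (k + 1) - (i - (k + 1))) div n)
             = coeff P (i - (k + 1)) * of_nat ((k * n - i) div n + 1)"
      by simp
    show "i - (k + 1) \<in> {..<k * d}" "i - (k + 1) + (k + 1) = i"
      using i kn by auto
  next
    fix j assume "j \<in> {..<k * d}"
    then show "j + (k + 1) - (k + 1) = j" "j + (k + 1) \<in> {k + 1..k * n}"
      by (auto simp: n_def algebra_simps)
  qed
  also have "\<dots> = (\<Sum>j\<le>d * (k + 1). coeff P j * of_nat ((d * (k + 1) - j) div n))"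
    by (rule sum.mono_neutral_left) (auto simp: n_def algebra_simps)
  finally show ?thesis
    by (simp add: P_def n_def)
qed

lemma of_nat_mod_3_eq:
  "of_nat (m mod 3) = 1 + (omega ^ m * (omega\<^sup>2 + 2 * omega) + (omega ^ m)\<^sup>2 * (omega + 2 * omega\<^sup>2)) / 3"
proof -
  have "of_nat r = 1 + (omega ^ r * (omega\<^sup>2 + 2 * omega) + (omega ^ r)\<^sup>2 * (omega + 2 * omega\<^sup>2)) / 3"
    if "r < 3" for r :: nat
  proof -
    from that consider "r = 0" | "r = 1" | "r = 2"
      by force
    then show ?thesis
    proof cases
      case 1
      show ?thesis
        using omega_squared_add_omega_add_1 unfolding 1 by (simp add: field_simps) algebra
    next
      case 2
      show ?thesis
        using omega_squared_add_omega_add_1 unfolding 2 by (simp add: field_simps) algebra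
    next
      case 3
      show ?thesis
        using omega_squared_add_omega_add_1 unfolding 3 by (simp add: field_simps) algebra
    qed
  qed
  from this[of "m mod 3"] show ?thesis
    by (simp flip: omega_power_mod_3)
qed

lemma nine_times_diff_div_3:
  assumes "j \<le> N"
  shows "9 * of_nat ((N - j) div 3) = 3 * of_nat N - 3 * of_nat j - 3
     - omega ^ N * (omega\<^sup>2 + 2 * omega) * (omega\<^sup>2) ^ j - omega ^ (2 * N) * (omega + 2 * omega\<^sup>2) * omega ^ j"
proof -
  define m where "m = N - j"
  have "of_nat m = (3 * of_nat (m div 3) + of_nat (m mod 3) :: complex)"
    by (metis mult_div_mod_eq of_nat_add of_nat_mult of_nat_numeral)
  moreover have "of_nat m = (of_nat N - of_nat j :: complex)"
    using assms by (simp add: m_def of_nat_diff)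
  moreover have power_m: "omega ^ m = omega ^ N * (omega\<^sup>2) ^ j"
  proof -
    have "omega ^ m * (omega ^ 3) ^ j = omega ^ N * (omega\<^sup>2) ^ j"
      using assms by (simp add: m_def power_add [symmetric] power_mult [symmetric] algebra_simps)
    then show ?thesis
      by (simp add: omega_cube)
  qed
  moreover have "(omega ^ m)\<^sup>2 = omega ^ (2 * N) * omega ^ j"
  proof -
    have "((omega\<^sup>2) ^ j)\<^sup>2 = (omega ^ 3) ^ j * omega ^ j"
      by (simp add: power_mult [symmetric] power_add [symmetric] algebra_simps)
    then show ?thesis
      unfolding power_m by (simp add: omega_cube power_mult_distrib power_mult [symmetric] mult.commute)
  qed
  ultimately show ?thesis
    unfolding m_def [symmetric] of_nat_mod_3_eq by (simp add: algebra_simps)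
qed

lemma poly_eq_sum_atMost:
  fixes P :: "'a :: {comm_semiring_1, semiring_no_zero_divisors} poly"
  assumes "degree P \<le> N"
  shows "poly P x = (\<Sum>j\<le>N. coeff P j * x ^ j)"
  unfolding poly_altdef using assms
  by (intro sum.mono_neutral_left) (auto simp: coeff_eq_0)

lemma poly_pderiv_1_eq_sum:
  fixes P :: "'a :: {semiring_char_0, comm_semiring_1, semiring_no_zero_divisors} poly"
  assumes "degree P \<le> N"
  shows "poly (pderiv P) 1 = (\<Sum>j\<le>N. of_nat j * coeff P j)"
proof -
  have "poly (pderiv P) 1 = (\<Sum>j\<le>N. of_nat (Suc j) * coeff P (Suc j))"
    using assms degree_pderiv[of P] by (simp add: poly_eq_sum_atMost[of _ N] coeff_pderiv)
  also have "\<dots> = (\<Sum>j\<le>Suc N. of_nat j * coeff P j)"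
    by (subst sum.atMost_Suc_shift) simp
  also have "\<dots> = (\<Sum>j\<le>N. of_nat j * coeff P j)"
    using assms by (simp add: coeff_eq_0)
  finally show ?thesis .
qed

lemma col_sum_closed_form:
  fixes a b c :: complex
  defines "p \<equiv> [:a, b, c:]"
  assumes "c \<noteq> 0"
  shows "9 * col_sum p (k + 1) = 3 * of_nat (k + 1) * (a + b + c) ^ k * (2 * a + b) - 3 * (a + b + c) ^ (k + 1)
     - (omega\<^sup>2 + 2 * omega) * omega ^ (2 * k + 2) * poly p (omega\<^sup>2) ^ (k + 1)
     - (omega + 2 * omega\<^sup>2) * omega ^ (4 * k + 4) * poly p omega ^ (k + 1)"
proof -
  define N where "N = 2 * k + 2"
  define P where "P = p ^ (k + 1)"
  have "degree p = 2"
    using assms by (simp add: p_def)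
  then have deg_P: "degree P \<le> N"
    using degree_power_le[of p "k + 1"] by (simp add: P_def N_def)
  have "9 * col_sum p (k + 1) = (\<Sum>j\<le>N. coeff P j * (9 * of_nat ((N - j) div 3)))"
    unfolding col_sum_eq_sum \<open>degree p = 2\<close> P_def N_def
    by (simp add: sum_distrib_left algebra_simps)
  also have "\<dots> = (\<Sum>j\<le>N. (3 * of_nat N - 3) * coeff P j - 3 * (of_nat j * coeff P j)
     - (omega ^ N * (omega\<^sup>2 + 2 * omega)) * (coeff P j * (omega\<^sup>2) ^ j)
     - (omega ^ (2 * N) * (omega + 2 * omega\<^sup>2)) * (coeff P j * omega ^ j))"
    by (rule sum.cong) (auto simp: nine_times_diff_div_3 algebra_simps)
  also have "\<dots> = (3 * of_nat N - 3) * poly P 1 - 3 * poly (pderiv P) 1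
     - (omega ^ N * (omega\<^sup>2 + 2 * omega)) * poly P (omega\<^sup>2)
     - (omega ^ (2 * N) * (omega + 2 * omega\<^sup>2)) * poly P omega"
    unfolding poly_eq_sum_atMost[OF deg_P] poly_pderiv_1_eq_sum[OF deg_P]
    by (simp add: sum_subtractf sum_distrib_left)
  also have "poly (pderiv P) 1 = of_nat (k + 1) * (a + b + c) ^ k * (b + 2 * c)"
    unfolding P_def using pderiv_power_Suc[of p k]
    by (simp add: p_def pderiv_pCons algebra_simps)
  also have "poly P 1 = (a + b + c) ^ (k + 1)"
    by (simp add: P_def p_def poly_power del: power_Suc) (simp add: algebra_simps)
  also have "2 * N = 4 * k + 4"
    by (simp add: N_def)
  finally show ?thesis
    by (simp add: N_def P_def algebra_simps)
qed

lemma col_sum_drift: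
  fixes a b c :: complex
  defines "p \<equiv> [:a, b, c:]"
  assumes "c \<noteq> 0" and "3 dvd L" and "(a + b + c) ^ L = 1"
    and "poly p omega = 0 \<or> poly p omega ^ L = 1" and "poly p (omega\<^sup>2) = 0 \<or> poly p (omega\<^sup>2) ^ L = 1"
  shows "9 * (col_sum p (k + L + 1) - col_sum p (k + 1)) = 3 * of_nat L * (a + b + c) ^ k * (2 * a + b)"
proof -
  have closed_form: "9 * col_sum p (n + 1) = 3 * of_nat (n + 1) * (a + b + c) ^ n * (2 * a + b)
     - 3 * (a + b + c) ^ (n + 1) - (omega\<^sup>2 + 2 * omega) * omega ^ (2 * n + 2) * poly p (omega\<^sup>2) ^ (n + 1)
     - (omega + 2 * omega\<^sup>2) * omega ^ (4 * n + 4) * poly p omega ^ (n + 1)" for n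
    unfolding p_def by (rule col_sum_closed_form[OF assms(2)])
  have "(2 * (k + L) + 2) mod 3 = (2 * k + 2) mod 3" "(4 * (k + L) + 4) mod 3 = (4 * k + 4) mod 3"
    using assms(3) by presburger+
  then have omega_L: "omega ^ (2 * (k + L) + 2) = omega ^ (2 * k + 2)"
    "omega ^ (4 * (k + L) + 4) = omega ^ (4 * k + 4)"
    by (metis omega_power_mod_3)+
  have u_L: "(a + b + c) ^ (k + L) = (a + b + c) ^ k" "(a + b + c) ^ (k + L + 1) = (a + b + c) ^ (k + 1)"
    using assms(4) by (simp_all add: power_add)
  have vw_L: "poly p omega ^ (k + L + 1) = poly p omega ^ (k + 1)"
    "poly p (omega\<^sup>2) ^ (k + L + 1) = poly p (omega\<^sup>2) ^ (k + 1)"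
    using power_add_eq_power[OF assms(5), of "k + 1"] power_add_eq_power[OF assms(6), of "k + 1"]
    by (simp_all add: ac_simps)
  have "9 * col_sum p (k + L + 1) = 3 * of_nat (k + L + 1) * (a + b + c) ^ k * (2 * a + b)
     - 3 * (a + b + c) ^ (k + 1) - (omega\<^sup>2 + 2 * omega) * omega ^ (2 * k + 2) * poly p (omega\<^sup>2) ^ (k + 1)
     - (omega + 2 * omega\<^sup>2) * omega ^ (4 * k + 4) * poly p omega ^ (k + 1)"
    using closed_form[of "k + L"] by (simp only: omega_L u_L vw_L)
  then show ?thesis
    unfolding right_diff_distrib closed_form by (simp add: algebra_simps)
qed

lemma unimodular_values_imp_special_form:
  fixes a c :: complex
  defines "p \<equiv> [:a, -2 * a, c:]"
  assumes "a \<noteq> 0" and "norm (poly p 1) = 1"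
    and "poly p omega = 0 \<or> norm (poly p omega) = 1"
    and "poly p (omega\<^sup>2) = 0 \<or> norm (poly p (omega\<^sup>2)) = 1"
  shows "c = -2 * a \<and> poly p omega = 3 * a"
proof -
  define u v w where "u = poly p 1" and "v = poly p omega" and "w = poly p (omega\<^sup>2)"
  have unit: "x * cnj x = 1" if "norm x = 1" for x :: complex
    using complex_norm_square[of x] that by simp
  have uu: "u * cnj u = 1" and vv: "v = 0 \<or> v * cnj v = 1" and ww: "w = 0 \<or> w * cnj w = 1"
    using assms(3-5) unit by (auto simp: u_def v_def w_def)
  have u: "u = c - a" and v: "v = a + omega * (-2 * a + omega * c)"
    and w: "w = a + omega\<^sup>2 * (-2 * a + omega\<^sup>2 * c)"
    by (simp_all add: u_def v_def w_def p_def)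
  \<comment> \<open>The three values depend linearly on a and c only, so they satisfy one linear relation.\<close>
  have rel: "3 * u + (2 + omega\<^sup>2) * v + (2 + omega) * w = 0"
    using u v w omega_squared_add_omega_add_1 by algebra
  have rel_cnj: "3 * cnj u + (2 + omega) * cnj v + (2 + omega\<^sup>2) * cnj w = 0"
  proof -
    have "cnj (3 * u + (2 + omega\<^sup>2) * v + (2 + omega) * w) = 0"
      using rel by simp
    moreover have "cnj (omega\<^sup>2) = omega"
      using omega_cube by (simp add: cnj_omega power_mult [symmetric] eval_nat_numeral)
    ultimately show ?thesis
      by (simp add: cnj_omega)
  qed
  have "v \<noteq> 0"
  proof
    assume "v = 0"
    then have "9 = 3 * (w * cnj w)"
      using rel rel_cnj uu omega_squared_add_omega_add_1 by simp algebra
    with ww show False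
      by auto
  qed
  have "w \<noteq> 0"
  proof
    assume "w = 0"
    then have "9 = 3 * (v * cnj v)"
      using rel rel_cnj uu omega_squared_add_omega_add_1 by simp algebra
    with vv show False
      by auto
  qed
  with \<open>v \<noteq> 0\<close> vv ww have vv: "v * cnj v = 1" and ww: "w * cnj w = 1"
    by auto
  \<comment> \<open>Taking norms in the relation shows that omega v (cnj w) is a primitive cube root of unity.\<close>
  define z where "z = omega * v * cnj w"
  have "(z - omega) * (z - omega\<^sup>2) = 0"
    unfolding z_def using rel rel_cnj uu vv ww omega_squared_add_omega_add_1 by algebra
  then consider "z = omega" | "z = omega\<^sup>2"
    by auto
  then show ?thesis
  proof cases
    case 1
    then have "omega * (v * cnj w) = omega * 1"
      by (simp add: z_def mult.assoc)
    then have "v * cnj w = 1"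
      using omega_cube by auto
    then have "v = w"
      using ww by algebra
    then have "c = -2 * a \<and> v = 3 * a"
      using u v w rel omega_squared_add_omega_add_1 by algebra
    then show ?thesis
      by (simp add: v_def)
  next
    case 2
    then have "omega * (v * cnj w) = omega * omega"
      by (simp add: z_def mult.assoc power2_eq_square)
    then have "v * cnj w = omega"
      using omega_cube by auto
    have "v = v * (w * cnj w)"
      using ww by simp
    also have "\<dots> = omega * w"
      using \<open>v * cnj w = omega\<close> by (simp add: ac_simps)
    finally have "v = omega * w" .
    then have "a = 0"
      using u v w rel omega_squared_add_omega_add_1 by algebra
    with \<open>a \<noteq> 0\<close> show ?thesis
      by simp
  qed
qed

lemma finite_period_imp_values_roots_of_unity:
  assumes "degree p = 2" and "has_finite_period p"
  obtains M where "M \<ge> 1" and "3 dvd M" and "\<forall>z. z ^ 3 = 1 \<longrightarrow> poly p z = 0 \<or> poly p z ^ M = 1"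
proof -
  obtain \<mu> where "\<mu> \<ge> 1" and eigen: "\<forall>z. z ^ 3 = 1 \<longrightarrow> z * poly p z = 0 \<or> (z * poly p z) ^ \<mu> = 1"
    using assms has_finite_period_iff by blast
  have "poly p z = 0 \<or> poly p z ^ (3 * \<mu>) = 1" if z: "z ^ 3 = 1" for z
  proof -
    from eigen z consider "z * poly p z = 0" | "(z * poly p z) ^ \<mu> = 1"
      by blast
    then show ?thesis
    proof cases
      case 1
      then show ?thesis
        using z by auto
    next
      case 2
      have "poly p z ^ (3 * \<mu>) = (z * poly p z) ^ (3 * \<mu>)"
        using z by (simp add: power_mult_distrib power_mult)
      also have "\<dots> = ((z * poly p z) ^ \<mu>) ^ 3"
        by (metis power_mult mult.commute)
      finally show ?thesis
        using 2 by simp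
    qed
  qed
  with \<open>\<mu> \<ge> 1\<close> show ?thesis
    by (intro that[of "3 * \<mu>"]) auto
qed

lemma periodic_add_mult:
  fixes s :: "nat \<Rightarrow> 'a" and N m :: nat
  assumes "\<forall>i\<ge>K. s (i + N) = s i" and "i \<ge> K"
  shows "s (i + m * N) = s i"
proof (induction m)
  case (Suc m)
  then show ?case
    using assms by (metis add.assoc le_add1 mult_Suc order_trans add.commute)
qed simp

lemma eventually_periodic_col_sum_imp:
  fixes a b c :: complex
  defines "p \<equiv> [:a, b, c:]"
  assumes "c \<noteq> 0" and "a + b + c \<noteq> 0" and "M \<ge> 1" and "3 dvd M"
    and roots: "\<forall>z. z ^ 3 = 1 \<longrightarrow> poly p z = 0 \<or> poly p z ^ M = 1"
    and "eventually_periodic (\<lambda>k. col_sum p (k + 1))"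
  shows "b = -2 * a"
proof -
  obtain N K where "N \<ge> 1" and periodic: "\<forall>i\<ge>K. col_sum p (i + N + 1) = col_sum p (i + 1)"
    using assms(7) unfolding eventually_periodic_def by auto
  define L where "L = M * N"
  have "col_sum p (K + L + 1) = col_sum p (K + 1)"
    using periodic_add_mult[of K "\<lambda>i. col_sum p (i + 1)" N K M] periodic by (simp add: L_def ac_simps)
  moreover have root_L: "poly p z = 0 \<or> poly p z ^ L = 1" if "z ^ 3 = 1" for z
    using roots that by (auto simp: L_def power_mult)
  then have "(a + b + c) ^ L = 1"
    using root_L[of 1] assms(3) by (simp add: p_def add.assoc)
  then have "9 * (col_sum p (K + L + 1) - col_sum p (K + 1)) = 3 * of_nat L * (a + b + c) ^ K * (2 * a + b)"
    unfolding p_def using assms(2,5) root_L[OF omega_cube] root_L[OF omega_squared_cube]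
    by (intro col_sum_drift) (simp_all add: L_def p_def)
  moreover have "L > 0"
    using \<open>M \<ge> 1\<close> \<open>N \<ge> 1\<close> by (simp add: L_def)
  ultimately show ?thesis
    using assms(3) by (simp add: add_eq_0_iff)
qed

lemma periodic_imp_special_form:
  fixes a b c :: complex
  assumes "a * c * (a + b + c) \<noteq> 0" and "has_finite_period [:a, b, c:]"
    and "eventually_periodic (\<lambda>k. col_sum [:a, b, c:] (k + 1))"
  shows "b = -2 * a \<and> c = -2 * a \<and> root_of_unity (3 * a)"
proof -
  have "a \<noteq> 0" "c \<noteq> 0" "a + b + c \<noteq> 0"
    using assms(1) by auto
  then obtain M where "M \<ge> 1" "3 dvd M" and roots: "\<forall>z. z ^ 3 = 1 \<longrightarrow> poly [:a, b, c:] z = 0 \<or> poly [:a, b, c:] z ^ M = 1"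
    using assms(2) finite_period_imp_values_roots_of_unity[of "[:a, b, c:]"] by auto
  have b: "b = -2 * a"
    using eventually_periodic_col_sum_imp[OF \<open>c \<noteq> 0\<close> \<open>a + b + c \<noteq> 0\<close> \<open>M \<ge> 1\<close> \<open>3 dvd M\<close> roots assms(3)] .
  have norm: "poly [:a, b, c:] z = 0 \<or> norm (poly [:a, b, c:] z) = 1" if "z ^ 3 = 1" for z
    using roots that power_eq_1_iff \<open>M \<ge> 1\<close> by fastforce
  have "norm (poly [:a, b, c:] 1) = 1"
    using norm[of 1] \<open>a + b + c \<noteq> 0\<close> by (simp add: add.assoc)
  then have "c = -2 * a \<and> poly [:a, b, c:] omega = 3 * a"
    using unimodular_values_imp_special_form[OF \<open>a \<noteq> 0\<close>, of c] norm[OF omega_cube]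
      norm[OF omega_squared_cube]
    unfolding b by blast
  moreover have "(3 * a) ^ M = 1"
    using roots[rule_format, OF omega_cube] \<open>a \<noteq> 0\<close> unfolding conjunct2[OF calculation] by simp
  ultimately show ?thesis
    using b \<open>M \<ge> 1\<close> unfolding root_of_unity_def by (auto intro!: exI[of _ M])
qed

lemma special_form_values:
  fixes a :: complex
  shows "poly [:a, -2 * a, -2 * a:] 1 = -3 * a" and "poly [:a, -2 * a, -2 * a:] omega = 3 * a"
    and "poly [:a, -2 * a, -2 * a:] (omega\<^sup>2) = 3 * a"
  using omega_squared_add_omega_add_1 omega_cube by (simp_all, algebra+)

lemma special_form_values_power:
  fixes a :: complex
  assumes "(3 * a) ^ n = 1" and "z ^ 3 = 1"
  shows "poly [:a, -2 * a, -2 * a:] z ^ (6 * n) = 1"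
proof -
  have "(3 * a) ^ (6 * n) = 1"
    using assms(1) by (metis mult.commute power_mult power_one)
  moreover have "(- 3 * a) ^ (6 * n) = (3 * a) ^ (6 * n)"
    using power_minus_even[of "6 * n" "3 * a"] by simp
  ultimately have "(- 3 * a) ^ (6 * n) = 1" "(3 * a) ^ (6 * n) = 1"
    by simp_all
  then show ?thesis
    using assms(2) special_form_values by (auto simp: cube_root_of_unity_iff)
qed

lemma special_form_periodic:
  fixes a :: complex
  assumes "(3 * a) ^ n = 1" and "n > 0"
  shows "has_finite_period [:a, -2 * a, -2 * a:]" and "eventually_periodic (\<lambda>k. col_sum [:a, -2 * a, -2 * a:] (k + 1))"
proof -
  let ?p = "[:a, -2 * a, -2 * a:]"
  have "a \<noteq> 0"
    using assms by (auto simp: zero_power)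
  have roots: "poly ?p z ^ (6 * n) = 1" if "z ^ 3 = 1" for z
    using special_form_values_power[OF assms(1) that] .
  have "(z * poly ?p z) ^ (6 * n) = 1" if "z ^ 3 = 1" for z
  proof -
    have "z ^ (6 * n) = (z ^ 3) ^ (2 * n)"
      by (simp flip: power_mult)
    then show ?thesis
      using roots[OF that] that by (simp add: power_mult_distrib)
  qed
  then show "has_finite_period ?p"
    using \<open>a \<noteq> 0\<close> assms(2) by (subst has_finite_period_iff) (auto intro!: exI[of _ "6 * n"])
  have "9 * (col_sum ?p (k + 6 * n + 1) - col_sum ?p (k + 1)) = 3 * of_nat (6 * n) * (a + -2 * a + -2 * a) ^ k * (2 * a + -2 * a)"
    for k
    using \<open>a \<noteq> 0\<close> roots[of 1] roots[OF omega_cube] roots[OF omega_squared_cube]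
    by (intro col_sum_drift) (simp_all add: add.assoc)
  then show "eventually_periodic (\<lambda>k. col_sum ?p (k + 1))"
    unfolding eventually_periodic_def using assms(2) by (auto intro!: exI[of _ "6 * n"])
qed

lemma special_form_circ_period:
  fixes a :: complex
  assumes "a \<noteq> 0" and "has_finite_period [:a, -2 * a, -2 * a:]"
  shows "6 dvd circ_period [:a, -2 * a, -2 * a:]" and "(3 * a) ^ circ_period [:a, -2 * a, -2 * a:] = 1"
proof -
  let ?p = "[:a, -2 * a, -2 * a:]"
  define m where "m = circ_period ?p"
  have eigen: "(z * poly ?p z) ^ m = 1" if "z ^ 3 = 1" for z
  proof -
    have "z * poly ?p z \<noteq> 0"
      using that assms(1) special_form_values by (auto simp: cube_root_of_unity_iff)
    then show ?thesis
      using circ_period_eigenvalues[OF _ assms(2) that] assms(1) by (simp add: m_def)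
  qed
  have h1: "((- 1) * (3 * a)) ^ m = 1" and h2: "(omega * (3 * a)) ^ m = 1"
    and h3: "(omega * (omega * (3 * a))) ^ m = 1"
    using eigen[of 1] eigen[OF omega_cube] eigen[OF omega_squared_cube] special_form_values
    by (simp_all add: power2_eq_square mult.assoc)
  then have "3 dvd m"
    by (simp only: power_mult_distrib [of omega] flip: omega_power_eq_1_iff) simp
  then have "omega ^ m = 1"
    by (simp add: omega_power_eq_1_iff)
  then have a_m: "(3 * a) ^ m = 1"
    using h2 by (simp add: power_mult_distrib [of omega])
  then have "(- 1) ^ m = (1 :: complex)"
    using h1 by (simp only: power_mult_distrib) simp
  then have "even m"
    by (auto simp: minus_one_power_iff split: if_splits)
  with \<open>3 dvd m\<close> a_m show "6 dvd circ_period ?p" and "(3 * a) ^ circ_period ?p = 1"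
    unfolding m_def by presburger+
qed

theorem proposition13:
  fixes a b c :: complex
  assumes "a * c * (a + b + c) \<noteq> 0"
  shows "((has_finite_period [:a, b, c:] \<and> eventually_periodic (\<lambda>k. col_sum [:a, b, c:] (k + 1)))
           \<longleftrightarrow> (b = -2 * a \<and> c = -2 * a \<and> root_of_unity (3 * a)))
       \<and> ((b = -2 * a \<and> c = -2 * a \<and> root_of_unity (3 * a)) \<longrightarrow>
           6 dvd circ_period [:a, b, c:] \<and> (3 * a) ^ circ_period [:a, b, c:] = 1)"
proof -
  have "a \<noteq> 0"
    using assms by auto
  have "has_finite_period [:a, b, c:] \<and> eventually_periodic (\<lambda>k. col_sum [:a, b, c:] (k + 1))
      \<and> 6 dvd circ_period [:a, b, c:] \<and> (3 * a) ^ circ_period [:a, b, c:] = 1"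
    if b: "b = -2 * a" and c: "c = -2 * a" and root: "root_of_unity (3 * a)"
  proof -
    obtain n where "n > 0" "(3 * a) ^ n = 1"
      using root unfolding root_of_unity_def by blast
    then show ?thesis
      using special_form_periodic special_form_circ_period[OF \<open>a \<noteq> 0\<close>] b c by blast
  qed
  then show ?thesis
    using periodic_imp_special_form[OF assms] by blast
qed

end
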